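(* The recurrence coefficients satisfy \[ \alpha_n(\vec t)=\sum_{k=1}^m t_kR_{n,k}+2n+1+\alpha,\qquad \beta_n(\vec t)=\frac{\big(n+\alpha+\sum_{k=1}^m r_{n,k}\big)\big(n+\sum_{k=1}^m r_{n,k}\big)}{1-\sum_{k=1}^m R_{n,k}}+\sum_{k=1}^m\frac{r_{n,k}^2}{R_{n,k}}. \]
   Context: Let $m\ge1$, $\alpha>-1$, $0<t_1<\dots<t_m$, real $\omega_0,\dots,\omega_m$ with $\sum_{k=0}^\ell\omega_k\ge0$ for $\ell=0,\dots,m$, $\theta$ the Heaviside function, $w_0(x)=x^\alpha e^{-x}$, $w(x;\vec t)=w_0(x)\big(\omega_0+\sum_k\omega_k\theta(x-t_k)\big)$ on $[0,\infty)$, $P_n$ the monic orthogonal polynomials w.r.t. $w$, $h_n=\int_0^\infty P_n^2w\,dx$, with three-term recurrence $xP_n=P_{n+1}+\alpha_nP_n+\beta_nP_{n-1}$, $\beta_n=h_n/h_{n-1}$. $R_{n,k}=\omega_k\frac{w_0(t_k)}{h_n}P_n^2(t_k)$, $r_{n,k}=\omega_k\frac{w_0(t_k)}{h_{n-1}}P_n(t_k)P_{n-1}(t_k)$. *)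

theory Defs
  imports "HOL-Analysis.Analysis" "HOL-Computational_Algebra.Polynomial"
begin

text \<open>Heaviside function (the value at 0 is irrelevant, a null set).\<close>
definition heaviside :: "real \<Rightarrow> real" where
  "heaviside x = (if x \<ge> 0 then 1 else 0)"

definition w0 :: "real \<Rightarrow> real \<Rightarrow> real" where
  "w0 a x = x powr a * exp (- x)"

definition wgt :: "nat \<Rightarrow> real \<Rightarrow> (nat \<Rightarrow> real) \<Rightarrow> (nat \<Rightarrow> real) \<Rightarrow> real \<Rightarrow> real" where
  "wgt m a om t x = w0 a x * (om 0 + (\<Sum>k=1..m. om k * heaviside (x - t k)))"

definition ip :: "(real \<Rightarrow> real) \<Rightarrow> real poly \<Rightarrow> real poly \<Rightarrow> real" where
  "ip w p q = (LINT x:{0..}|lborel. poly p x * poly q x * w x)"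

definition monic_OPs :: "(real \<Rightarrow> real) \<Rightarrow> (nat \<Rightarrow> real poly) \<Rightarrow> bool" where
  "monic_OPs w P \<longleftrightarrow>
     (\<forall>n. degree (P n) = n \<and> lead_coeff (P n) = 1 \<and> ip w (P n) (P n) \<noteq> 0) \<and>
     (\<forall>m n. m \<noteq> n \<longrightarrow> ip w (P m) (P n) = 0)"

end

theory Submission
  imports Defs "HOL-Real_Asymp.Real_Asymp"
begin

text \<open>
  Write \<open>I f\<close> for the integral of \<open>f\<close> against the weight and
  \<open>S f = sum_k \<omega>_k w0(t_k) f(t_k)\<close>.  Integrating the derivative of \<open>x^(a+1) e^(-x) f(x)\<close>
  against the step function \<open>\<omega>_0 + sum_k \<omega>_k \<theta>(x - t_k)\<close> gives the Pearson-type identity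
  \<open>I(x f' + (a + 1 - x) f) = - S(x f)\<close>: every jump of the step function leaves a point
  evaluation.  For \<open>f = P_n^2\<close> orthogonality turns it into
  \<open>\<alpha>_n h_n = I(x P_n^2) = (2n + 1 + a) h_n + S(x P_n^2)\<close>.

  For \<open>\<beta>_n\<close> consider the linear form \<open>L g = I g - I g' - S g\<close>, which satisfies
  \<open>L(x f) = a I f\<close>.  Writing \<open>P_n = u + x Q\<close> and \<open>P_(n-1) = v + x Q'\<close>, orthogonality gives
  \<open>L(P_n^2) = u L(P_n)\<close>, \<open>L(P_(n-1)^2) = v L(P_(n-1))\<close> and
  \<open>L(P_n P_(n-1)) = v L(P_n) = u L(P_(n-1)) + a h_(n-1)\<close>, hence
  \<open>L(P_n^2) L(P_(n-1)^2) = L(P_n P_(n-1)) (L(P_n P_(n-1)) - a h_(n-1))\<close>.  The three values of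
  \<open>L\<close> are again computed by orthogonality, and together with \<open>\<beta>_n = h_n / h_(n-1)\<close> this
  identity is the formula for \<open>\<beta>_n\<close>.
\<close>

section \<open>Tail integrals of the Laguerre weight\<close>

lemma set_integrable_powr_div_exp:
  fixes b :: real
  assumes "b > -1"
  shows "set_integrable lborel {0..} (\<lambda>x. x powr b / exp x)"
proof -
  have "Gamma (b + 1) = (\<integral>\<^sup>+x. ennreal (indicator {0..} x * x powr (b + 1 - 1) / exp x) \<partial>lborel)"
    by (rule Gamma_conv_nn_integral_real) (use assms in auto)
  then have "(\<integral>\<^sup>+x. ennreal (indicator {0..} x * x powr b / exp x) \<partial>lborel) < \<infinity>"
    by (metis ennreal_less_top infinity_ennreal_def add_diff_cancel_right')
  then show ?thesis
    unfolding set_integrable_def by (intro integrableI_nonneg) (auto simp: indicator_def)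
qed

lemma set_integrable_poly_w0:
  assumes a: "a > -1" and s: "s \<ge> 0"
  shows "set_integrable lborel {s..} (\<lambda>x. poly f x * w0 a x)"
proof -
  have monomial: "set_integrable lborel {0..} (\<lambda>x. x ^ i * w0 a x)" for i
  proof -
    have "x ^ i * w0 a x = x powr (a + real i) / exp x" if "x \<in> {0..}" for x
      using that by (cases "x = 0")
        (auto simp: w0_def powr_add powr_realpow exp_minus divide_inverse mult_ac)
    then have "set_integrable lborel {0..} (\<lambda>x. x ^ i * w0 a x)
             = set_integrable lborel {0..} (\<lambda>x. x powr (a + real i) / exp x)"
      by (intro set_integrable_cong) simp_all
    then show ?thesis
      using set_integrable_powr_div_exp[of "a + real i"] a by simp
  qed
  have "set_integrable lborel {0..} (\<lambda>x. coeff f i * (x ^ i * w0 a x))" for i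
    using monomial by (rule set_integrable_mult_right)
  then have "integrable lborel
      (\<lambda>x. \<Sum>i\<le>degree f. indicator {0..} x *\<^sub>R (coeff f i * (x ^ i * w0 a x)))"
    unfolding set_integrable_def by (intro Bochner_Integration.integrable_sum)
  then have "set_integrable lborel {0..} (\<lambda>x. poly f x * w0 a x)"
    unfolding set_integrable_def poly_altdef sum_distrib_right scaleR_sum_right
    by (simp add: mult.assoc)
  then show ?thesis
    by (rule set_integrable_subset) (use s in auto)
qed

lemma tendsto_powr_exp_poly_at_top:
  fixes b :: real
  shows "((\<lambda>x. x powr b * exp (- x) * poly f x) \<longlongrightarrow> 0) at_top"
proof -
  have "((\<lambda>x. \<Sum>i\<le>degree f. coeff f i * (x powr (b + real i) / exp x)) \<longlongrightarrow> 0) at_top"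
    by (intro tendsto_null_sum tendsto_mult_right_zero) real_asymp
  moreover have "\<forall>\<^sub>F x in at_top. (\<Sum>i\<le>degree f. coeff f i * (x powr (b + real i) / exp x))
                                = x powr b * exp (- x) * poly f x"
    using eventually_gt_at_top[of 0]
    by eventually_elim
      (simp add: poly_altdef sum_distrib_left powr_add powr_realpow exp_minus divide_inverse mult_ac)
  ultimately show ?thesis
    by (rule Lim_transform_eventually)
qed

lemma tendsto_powr_exp_poly_at_right_0:
  fixes b :: real
  assumes "b > 0"
  shows "((\<lambda>x. x powr b * exp (- x) * poly f x) \<longlongrightarrow> 0) (at_right 0)"
proof -
  have "((\<lambda>x::real. x powr b) \<longlongrightarrow> 0) (at_right 0)"
    by (rule tendsto_zero_powrI[where b = b])
      (use assms eventually_at_right_less[of "0::real"] in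
        \<open>auto simp: tendsto_ident_at elim: eventually_mono\<close>)
  moreover have "((\<lambda>x. exp (- x) * poly f x) \<longlongrightarrow> exp (- 0) * poly f 0) (at_right 0)"
    by (intro tendsto_intros)
  ultimately have "((\<lambda>x. x powr b * (exp (- x) * poly f x)) \<longlongrightarrow> 0 * (exp (- 0) * poly f 0)) (at_right 0)"
    by (rule tendsto_mult)
  then show ?thesis
    by (simp add: mult.assoc)
qed

definition w0_tail_integral :: "real \<Rightarrow> real \<Rightarrow> real poly \<Rightarrow> real" where
  "w0_tail_integral a s f = (LINT x:{s..}|lborel. poly f x * w0 a x)"

lemma w0_tail_integral_add:
  assumes "a > -1" "s \<ge> 0"
  shows "w0_tail_integral a s (f + g) = w0_tail_integral a s f + w0_tail_integral a s g"
  unfolding w0_tail_integral_def poly_add distrib_right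
  by (rule set_integral_add(2)) (rule set_integrable_poly_w0[OF assms])+

lemma w0_tail_integral_smult: "w0_tail_integral a s (smult c f) = c * w0_tail_integral a s f"
  by (simp add: w0_tail_integral_def mult.assoc)

text \<open>The integrand is the derivative of \<open>x^(a+1) e^(-x) f(x)\<close>, which vanishes at infinity.\<close>

lemma w0_tail_integral_pearson:
  assumes a: "a > -1" and s: "s \<ge> 0"
  shows "w0_tail_integral a s (smult (a + 1) f + pCons 0 (pderiv f) - pCons 0 f)
           = - (s powr (a + 1) * exp (- s) * poly f s)"
proof -
  define g where "g x = poly (smult (a + 1) f + pCons 0 (pderiv f) - pCons 0 f) x * w0 a x" for x
  define G where "G x = x powr (a + 1) * exp (- x) * poly f x" for x
  have "w0_tail_integral a s (smult (a + 1) f + pCons 0 (pderiv f) - pCons 0 f)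
      = (LINT x:{s<..}|lborel. g x)"
    unfolding w0_tail_integral_def g_def
    by (rule set_integral_discrete_difference[where X = "{s}"]) auto
  also have "\<dots> = (LBINT x=ereal s..\<infinity>. g x)"
    by (simp add: interval_integral_to_infinity_eq)
  also have "\<dots> = 0 - G s"
  proof (rule interval_integral_FTC_integrable)
    fix x
    assume "ereal s < ereal x"
    then have x: "x > 0"
      using s by simp
    have "(G has_real_derivative (a + 1) * x powr (a + 1 - 1) * exp (- x) * poly f x
        + x powr (a + 1) * (exp (- x) * (- 1)) * poly f x
        + x powr (a + 1) * exp (- x) * poly (pderiv f) x) (at x)"
      unfolding G_def using x by (auto intro!: derivative_eq_intros simp: algebra_simps)
    moreover have "x powr (a + 1) = x * x powr a"
      using x by (simp add: powr_add)
    ultimately show "(G has_vector_derivative g x) (at x)"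
      by (simp add: g_def w0_def algebra_simps has_real_derivative_iff_has_vector_derivative)
    show "isCont g x"
      unfolding g_def w0_def using x by (auto intro!: continuous_intros)
  next
    show "set_integrable lborel (einterval s \<infinity>) g"
      unfolding g_def by (rule set_integrable_subset[OF set_integrable_poly_w0[OF a s]]) auto
    show "((G \<circ> real_of_ereal) \<longlongrightarrow> G s) (at_right (ereal s))"
      unfolding ereal_tendsto_simps1
    proof (cases "s = 0")
      case True
      then show "(G \<longlongrightarrow> G s) (at_right s)"
        unfolding G_def using tendsto_powr_exp_poly_at_right_0[of "a + 1" f] a by simp
    next
      case False
      then have "isCont G s"
        unfolding G_def using s by (auto intro!: continuous_intros)
      then show "(G \<longlongrightarrow> G s) (at_right s)"
        unfolding isCont_def by (rule Lim_at_imp_Lim_at_within)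
    qed
    show "((G \<circ> real_of_ereal) \<longlongrightarrow> 0) (at_left \<infinity>)"
      unfolding ereal_tendsto_simps1 G_def by (rule tendsto_powr_exp_poly_at_top)
  qed simp
  finally show ?thesis
    by (simp add: G_def)
qed

section \<open>Orthogonal polynomials for a Pearson-type functional\<close>

locale monic_orthogonal_functional =
  fixes I :: "real poly \<Rightarrow> real" and P :: "nat \<Rightarrow> real poly"
  assumes I_add: "I (p + q) = I p + I q"
    and I_smult: "I (smult c p) = c * I p"
    and degree_P: "degree (P n) = n"
    and lead_coeff_P: "lead_coeff (P n) = 1"
    and I_P_P_nonzero: "I (P n * P n) \<noteq> 0"
    and orthogonal: "k \<noteq> n \<Longrightarrow> I (P k * P n) = 0"
begin

lemma I_zero: "I 0 = 0"
  using I_smult[of 0 0] by simp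

lemma I_diff: "I (p - q) = I p - I q"
  using I_add[of "p - q" q] by simp

lemma coeff_P_self: "coeff (P n) n = 1"
  using lead_coeff_P[of n] by (simp add: degree_P)

lemma coeff_P_above: "n < i \<Longrightarrow> coeff (P n) i = 0"
  by (simp add: coeff_eq_0 degree_P)

lemma coeff_pderiv_P_above: "n \<le> i \<Longrightarrow> coeff (pderiv (P n)) i = 0"
  by (simp add: coeff_pderiv coeff_P_above)

lemma I_P_mult_eq_0:
  assumes "\<And>i. d \<le> i \<Longrightarrow> coeff q i = 0" and "d \<le> n"
  shows "I (P n * q) = 0"
  using assms
proof (induction d arbitrary: q)
  case 0
  then have "q = 0"
    by (intro poly_eqI) simp
  then show ?case
    by (simp add: I_zero)
next
  case (Suc d)
  define r where "r = q - smult (coeff q d) (P d)"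
  have r_coeff: "coeff r i = 0" if "d \<le> i" for i
  proof (cases "i = d")
    case True
    then show ?thesis
      by (simp add: r_def coeff_P_self)
  next
    case False
    with that have "Suc d \<le> i" and "d < i"
      by simp_all
    then show ?thesis
      using Suc.prems(1) by (simp add: r_def coeff_P_above)
  qed
  have "I (P n * r) = 0"
    using Suc.IH[OF r_coeff] Suc.prems(2) by simp
  moreover have "I (P d * P n) = 0"
    using Suc.prems(2) by (intro orthogonal) simp
  moreover have "P n * q = P n * r + smult (coeff q d) (P d * P n)"
    by (simp add: r_def algebra_simps)
  ultimately show ?case
    by (simp add: I_add I_smult)
qed

lemma I_P_mult_degree_le:
  assumes "degree q \<le> n"
  shows "I (P n * q) = coeff q n * I (P n * P n)"
proof -
  define r where "r = q - smult (coeff q n) (P n)"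
  have r_coeff: "coeff r i = 0" if "n \<le> i" for i
  proof (cases "i = n")
    case True
    then show ?thesis
      by (simp add: r_def coeff_P_self)
  next
    case False
    with that assms have "degree q < i" and "n < i"
      by simp_all
    then show ?thesis
      by (simp add: r_def coeff_P_above coeff_eq_0)
  qed
  have "I (P n * r) = 0"
    using I_P_mult_eq_0[OF r_coeff] by simp
  moreover have "P n * q = P n * r + smult (coeff q n) (P n * P n)"
    by (simp add: r_def algebra_simps)
  ultimately show ?thesis
    by (simp add: I_add I_smult)
qed

lemma I_x_P_Suc_P: "I (pCons 0 (P (Suc n) * P n)) = I (P (Suc n) * P (Suc n))"
proof -
  have "degree (pCons 0 (P n)) \<le> Suc n"
    using degree_pCons_le[of 0 "P n"] by (simp add: degree_P)
  then show ?thesis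
    using I_P_mult_degree_le[of "pCons 0 (P n)" "Suc n"] by (simp add: coeff_P_self)
qed

lemma I_x_P_pderiv_P: "I (pCons 0 (P n * pderiv (P n))) = real n * I (P n * P n)"
proof (cases n)
  case 0
  have "pderiv (P 0) = 0"
    using degree_P[of 0] by (simp add: pderiv_eq_0_iff)
  then show ?thesis
    using 0 by (simp add: I_zero)
next
  case (Suc k)
  have "degree (pCons 0 (pderiv (P n))) \<le> n"
    using degree_pCons_le[of 0 "pderiv (P n)"] Suc by (simp add: degree_pderiv degree_P)
  then show ?thesis
    using I_P_mult_degree_le[of "pCons 0 (pderiv (P n))" n] Suc
    by (simp add: coeff_pderiv coeff_P_self)
qed

lemma recurrence_I_x_P_squared:
  assumes "pCons 0 (P n) = P (Suc n) + smult c (P n) + q"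
    and "\<And>i. n \<le> i \<Longrightarrow> coeff q i = 0"
  shows "I (pCons 0 (P n * P n)) = c * I (P n * P n)"
proof -
  have "pCons 0 (P n * P n) = P n * P (Suc n) + smult c (P n * P n) + P n * q"
    using arg_cong[OF assms(1), of "(*) (P n)"] by (simp add: algebra_simps)
  moreover have "I (P n * q) = 0"
    using assms(2) by (intro I_P_mult_eq_0) auto
  ultimately show ?thesis
    by (simp add: I_add I_smult orthogonal)
qed

lemma recurrence_beta_eq:
  assumes "pCons 0 (P (Suc n)) = P (Suc (Suc n)) + smult c (P (Suc n)) + smult b (P n)"
  shows "b * I (P n * P n) = I (P (Suc n) * P (Suc n))"
proof -
  have "pCons 0 (P (Suc n) * P n)
      = P n * P (Suc (Suc n)) + smult c (P n * P (Suc n)) + smult b (P n * P n)"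
    using arg_cong[OF assms, of "(*) (P n)"] by (simp add: algebra_simps)
  then have "I (pCons 0 (P (Suc n) * P n)) = b * I (P n * P n)"
    by (simp add: I_add I_smult orthogonal)
  then show ?thesis
    by (simp add: I_x_P_Suc_P)
qed

end

locale laguerre_type_functional = monic_orthogonal_functional I P
  for I :: "real poly \<Rightarrow> real" and P :: "nat \<Rightarrow> real poly" +
  fixes S :: "real poly \<Rightarrow> real" and a :: real
  assumes S_add: "S (p + q) = S p + S q"
    and S_smult: "S (smult c p) = c * S p"
    and pearson: "I (smult (a + 1) f + pCons 0 (pderiv f) - pCons 0 f) = - S (pCons 0 f)"
begin

lemma I_x_P_squared:
  "I (pCons 0 (P n * P n)) = (2 * real n + 1 + a) * I (P n * P n) + S (pCons 0 (P n * P n))"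
proof -
  have "pCons 0 (pderiv (P n * P n)) = pCons 0 (P n * pderiv (P n)) + pCons 0 (P n * pderiv (P n))"
    unfolding pderiv_mult by simp
  then have "I (pCons 0 (pderiv (P n * P n))) = 2 * real n * I (P n * P n)"
    by (simp only: I_add I_x_P_pderiv_P)
  then show ?thesis
    using pearson[of "P n * P n"] by (simp add: I_add I_diff I_smult algebra_simps)
qed

lemma recurrence_alpha_eq:
  assumes "pCons 0 (P n) = P (Suc n) + smult c (P n) + q"
    and "\<And>i. n \<le> i \<Longrightarrow> coeff q i = 0"
  shows "c = S (pCons 0 (P n * P n)) / I (P n * P n) + 2 * real n + 1 + a"
  using recurrence_I_x_P_squared[OF assms] I_x_P_squared[of n] I_P_P_nonzero[of n]
  by (simp add: field_simps)

definition pearson_form :: "real poly \<Rightarrow> real" where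
  "pearson_form g = I g - I (pderiv g) - S g"

lemma pearson_form_x: "pearson_form (pCons 0 f) = a * I f"
  using pearson[of f] by (simp add: pearson_form_def pderiv_pCons I_add I_diff I_smult algebra_simps)

lemma pearson_form_mult_pCons: "pearson_form (p * pCons v q) = v * pearson_form p + a * I (p * q)"
proof -
  have "pearson_form (p * pCons v q) = pearson_form (smult v p) + pearson_form (pCons 0 (p * q))"
    by (simp add: pearson_form_def pderiv_add I_add S_add)
  then show ?thesis
    unfolding pearson_form_x by (simp add: pearson_form_def pderiv_smult I_smult S_smult algebra_simps)
qed

lemma pearson_form_P_squared: "pearson_form (P n * P n) = I (P n * P n) - S (P n * P n)"
proof -
  have "I (P n * pderiv (P n)) = 0"
    by (rule I_P_mult_eq_0[of n]) (simp_all add: coeff_pderiv_P_above)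
  then show ?thesis
    unfolding pearson_form_def pderiv_mult I_add by simp
qed

lemma pearson_form_P_Suc_P:
  "pearson_form (P (Suc n) * P n) = - (real (Suc n) * I (P n * P n)) - S (P (Suc n) * P n)"
proof -
  have "I (P (Suc n) * pderiv (P n)) = 0"
    by (rule I_P_mult_eq_0[of n]) (simp_all add: coeff_pderiv_P_above)
  moreover have "I (P n * pderiv (P (Suc n))) = real (Suc n) * I (P n * P n)"
    using I_P_mult_degree_le[of "pderiv (P (Suc n))" n]
    by (simp add: degree_pderiv degree_P coeff_pderiv coeff_P_self)
  moreover have "I (P (Suc n) * P n) = 0"
    by (simp add: orthogonal)
  ultimately show ?thesis
    by (simp add: pearson_form_def pderiv_mult I_add)
qed

lemma pearson_form_consecutive:
  "pearson_form (P (Suc n) * P (Suc n)) * pearson_form (P n * P n)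
     = pearson_form (P (Suc n) * P n) * (pearson_form (P (Suc n) * P n) - a * I (P n * P n))"
proof -
  obtain u Q where PSuc: "P (Suc n) = pCons u Q"
    by (cases "P (Suc n)")
  obtain v Q' where Pn: "P n = pCons v Q'"
    by (cases "P n")
  have Q: "coeff Q i = 0" if "Suc n \<le> i" for i
    using coeff_P_above[of "Suc n" "Suc i"] that by (simp add: PSuc)
  have Q': "coeff Q' i = 0" if "n \<le> i" for i
    using coeff_P_above[of n "Suc i"] that by (simp add: Pn)
  have "degree Q \<le> n"
    using Q by (intro degree_le) auto
  then have I_P_Q: "I (P n * Q) = I (P n * P n)"
    using coeff_P_self[of "Suc n"] by (simp add: I_P_mult_degree_le PSuc)
  have "pearson_form (P (Suc n) * P (Suc n)) = u * pearson_form (P (Suc n))"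
    using pearson_form_mult_pCons[of "P (Suc n)" u Q] I_P_mult_eq_0[OF Q, of "Suc n"]
    by (simp add: PSuc[symmetric])
  moreover have "pearson_form (P n * P n) = v * pearson_form (P n)"
    using pearson_form_mult_pCons[of "P n" v Q'] I_P_mult_eq_0[OF Q', of n]
    by (simp add: Pn[symmetric])
  moreover have "pearson_form (P (Suc n) * P n) = v * pearson_form (P (Suc n))"
    using pearson_form_mult_pCons[of "P (Suc n)" v Q'] I_P_mult_eq_0[OF Q', of "Suc n"]
    by (simp add: Pn[symmetric])
  moreover have "pearson_form (P (Suc n) * P n) = u * pearson_form (P n) + a * I (P n * P n)"
    using pearson_form_mult_pCons[of "P n" u Q] I_P_Q
    by (simp add: PSuc[symmetric] mult.commute)
  ultimately show ?thesis
    by simp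
qed

lemma recurrence_beta_formula:
  assumes rec: "pCons 0 (P (Suc n)) = P (Suc (Suc n)) + smult c (P (Suc n)) + smult b (P n)"
    and ne: "S (P (Suc n) * P (Suc n)) \<noteq> I (P (Suc n) * P (Suc n))"
  shows "b = (real (Suc n) + a + S (P (Suc n) * P n) / I (P n * P n))
               * (real (Suc n) + S (P (Suc n) * P n) / I (P n * P n))
               / (1 - S (P (Suc n) * P (Suc n)) / I (P (Suc n) * P (Suc n)))
             + I (P (Suc n) * P (Suc n)) / (I (P n * P n))\<^sup>2 * S (P n * P n)"
proof -
  define h1 h0 s11 s10 s00 where "h1 = I (P (Suc n) * P (Suc n))" and "h0 = I (P n * P n)"
    and "s11 = S (P (Suc n) * P (Suc n))" and "s10 = S (P (Suc n) * P n)" and "s00 = S (P n * P n)"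
  have key: "(h1 - s11) * (h0 - s00) = (real (Suc n) * h0 + s10) * (real (Suc n) * h0 + s10 + a * h0)"
    using pearson_form_consecutive[of n]
    unfolding pearson_form_P_squared pearson_form_P_Suc_P h1_def h0_def s11_def s10_def s00_def
    by (simp add: algebra_simps)
  have h0: "h0 \<noteq> 0" and h1: "h1 \<noteq> 0" and ne': "h1 - s11 \<noteq> 0"
    using I_P_P_nonzero ne by (auto simp: h0_def h1_def s11_def)
  have "b = h1 / h0"
    using recurrence_beta_eq[OF rec] h0 by (simp add: h0_def h1_def field_simps)
  also have "\<dots> = (h1 - s11) * (h0 - s00) / h0\<^sup>2 / ((h1 - s11) / h1) + h1 / h0\<^sup>2 * s00"
    using h0 h1 ne' by (simp add: field_simps power2_eq_square)
  also have "(h1 - s11) * (h0 - s00) / h0\<^sup>2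
      = (real (Suc n) + a + s10 / h0) * (real (Suc n) + s10 / h0)"
    unfolding key using h0 by (simp add: field_simps power2_eq_square)
  also have "(h1 - s11) / h1 = 1 - s11 / h1"
    using h1 by (simp add: field_simps)
  finally show ?thesis
    by (simp add: h0_def h1_def s11_def s10_def s00_def)
qed

end

section \<open>The perturbed Laguerre weight\<close>

lemma ip_mult_one: "ip w (p * q) 1 = ip w p q"
  by (simp add: ip_def)

lemma ip_wgt_eq_tails:
  assumes a: "a > -1" and t: "\<forall>k\<in>{1..m}. t k \<ge> 0"
  shows "ip (wgt m a om t) f 1
       = om 0 * w0_tail_integral a 0 f + (\<Sum>k=1..m. om k * w0_tail_integral a (t k) f)"
proof -
  define F where "F x = poly f x * w0 a x" for x
  define T where "T s x = indicator {s..} x *\<^sub>R F x" for s x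
  have T_integrable: "integrable lborel (T s)" if "s \<ge> 0" for s
    using set_integrable_poly_w0[OF a that] unfolding set_integrable_def T_def F_def .
  have heaviside_indicator: "indicator {0..} x * heaviside (x - t k) = (indicator {t k..} x :: real)"
    if "k \<in> {1..m}" for k x
    using bspec[OF t that] by (auto simp: heaviside_def indicator_def)
  have integrand: "indicator {0..} x *\<^sub>R (poly f x * poly 1 x * wgt m a om t x)
      = om 0 * T 0 x + (\<Sum>k=1..m. om k * T (t k) x)" for x
  proof -
    have "indicator {0..} x *\<^sub>R (poly f x * poly 1 x * wgt m a om t x)
        = om 0 * T 0 x + (\<Sum>k=1..m. om k * ((indicator {0..} x * heaviside (x - t k)) * F x))"
      by (simp add: T_def F_def wgt_def sum_distrib_left sum_distrib_right algebra_simps)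
    also have "\<dots> = om 0 * T 0 x + (\<Sum>k=1..m. om k * T (t k) x)"
      by (intro arg_cong2[where f = "(+)"] refl sum.cong) (simp_all add: heaviside_indicator T_def)
    finally show ?thesis .
  qed
  have "ip (wgt m a om t) f 1 = (\<integral>x. om 0 * T 0 x \<partial>lborel) + (\<integral>x. (\<Sum>k=1..m. om k * T (t k) x) \<partial>lborel)"
    unfolding ip_def set_lebesgue_integral_def integrand
    by (intro Bochner_Integration.integral_add Bochner_Integration.integrable_sum
        integrable_mult_right T_integrable bspec[OF t]) simp
  also have "(\<integral>x. (\<Sum>k=1..m. om k * T (t k) x) \<partial>lborel) = (\<Sum>k=1..m. \<integral>x. om k * T (t k) x \<partial>lborel)"
    by (intro Bochner_Integration.integral_sum integrable_mult_right T_integrable bspec[OF t])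
  finally show ?thesis
    by (simp add: w0_tail_integral_def set_lebesgue_integral_def T_def F_def)
qed

definition jump_functional ::
    "nat \<Rightarrow> real \<Rightarrow> (nat \<Rightarrow> real) \<Rightarrow> (nat \<Rightarrow> real) \<Rightarrow> real poly \<Rightarrow> real" where
  "jump_functional m a om t f = (\<Sum>k=1..m. om k * w0 a (t k) * poly f (t k))"

lemma ip_wgt_pearson:
  assumes a: "a > -1" and t: "\<forall>k\<in>{1..m}. t k > 0"
  shows "ip (wgt m a om t) (smult (a + 1) f + pCons 0 (pderiv f) - pCons 0 f) 1
       = - jump_functional m a om t (pCons 0 f)"
proof -
  have t0: "\<forall>k\<in>{1..m}. t k \<ge> 0"
    using t less_imp_le by blast
  have "(\<Sum>k=1..m. om k * w0_tail_integral a (t k) (smult (a + 1) f + pCons 0 (pderiv f) - pCons 0 f))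
      = - jump_functional m a om t (pCons 0 f)"
    unfolding jump_functional_def sum_negf[symmetric]
  proof (rule sum.cong)
    fix k
    assume "k \<in> {1..m}"
    with t have "t k > 0"
      by blast
    moreover have "t k powr (a + 1) = t k * t k powr a"
      using \<open>t k > 0\<close> by (simp add: powr_add)
    ultimately show "om k * w0_tail_integral a (t k) (smult (a + 1) f + pCons 0 (pderiv f) - pCons 0 f)
        = - (om k * w0 a (t k) * poly (pCons 0 f) (t k))"
      by (simp add: w0_tail_integral_pearson[OF a] w0_def)
  qed simp
  then show ?thesis
    by (simp add: ip_wgt_eq_tails[OF a t0] w0_tail_integral_pearson[OF a])
qed

lemma laguerre_type_functional_wgt:
  assumes a: "a > -1" and t: "\<forall>k\<in>{1..m}. t k > 0"
    and OP: "monic_OPs (wgt m a om t) P"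
  shows "laguerre_type_functional (\<lambda>f. ip (wgt m a om t) f 1) P (jump_functional m a om t) a"
proof unfold_locales
  have t0: "\<forall>k\<in>{1..m}. t k \<ge> 0"
    using t less_imp_le by blast
  show "ip (wgt m a om t) (p + q) 1 = ip (wgt m a om t) p 1 + ip (wgt m a om t) q 1" for p q
  proof -
    have "(\<Sum>k=1..m. om k * w0_tail_integral a (t k) (p + q))
        = (\<Sum>k=1..m. om k * w0_tail_integral a (t k) p) + (\<Sum>k=1..m. om k * w0_tail_integral a (t k) q)"
      unfolding sum.distrib[symmetric]
      by (intro sum.cong) (simp_all add: w0_tail_integral_add[OF a] t0 distrib_left)
    then show ?thesis
      by (simp add: ip_wgt_eq_tails[OF a t0] w0_tail_integral_add[OF a] distrib_left)
  qed
  show "ip (wgt m a om t) (smult c p) 1 = c * ip (wgt m a om t) p 1" for c p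
    by (simp add: ip_wgt_eq_tails[OF a t0] w0_tail_integral_smult sum_distrib_left algebra_simps)
  show "jump_functional m a om t (p + q) = jump_functional m a om t p + jump_functional m a om t q"
    for p q
    by (simp add: jump_functional_def sum.distrib algebra_simps)
  show "jump_functional m a om t (smult c p) = c * jump_functional m a om t p" for c p
    by (simp add: jump_functional_def sum_distrib_left algebra_simps)
  show "ip (wgt m a om t) (smult (a + 1) f + pCons 0 (pderiv f) - pCons 0 f) 1
      = - jump_functional m a om t (pCons 0 f)" for f
    by (rule ip_wgt_pearson[OF a t])
  show "degree (P n) = n" "lead_coeff (P n) = 1" "ip (wgt m a om t) (P n * P n) 1 \<noteq> 0" for n
    using OP unfolding monic_OPs_def ip_mult_one by blast+
  show "k \<noteq> n \<Longrightarrow> ip (wgt m a om t) (P k * P n) 1 = 0" for k n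
    using OP unfolding monic_OPs_def ip_mult_one by blast
qed

lemma pos_of_increasing_ivl:
  fixes t :: "nat \<Rightarrow> real"
  assumes "0 < t 1" and "\<And>k. 1 \<le> k \<Longrightarrow> k < m \<Longrightarrow> t k < t (Suc k)"
  shows "\<forall>k\<in>{1..m}. t k > 0"
proof
  fix k
  assume "k \<in> {1..m}"
  moreover have "t i \<le> t (Suc i)" if "i \<in> {1..<m}" for i
    using assms(2)[of i] that by simp
  ultimately have "t 1 \<le> t k"
    by (intro lift_Suc_mono_le_ivl[of "{1..<m}" t 1 k]) auto
  with assms(1) show "t k > 0"
    by simp
qed

lemma jump_functional_div:
  "jump_functional m a om t p / c = (\<Sum>k=1..m. om k * w0 a (t k) / c * poly p (t k))"
  by (simp add: jump_functional_def sum_divide_distrib)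

lemma sum_square_ratio_eq_jump_functional:
  assumes t: "\<forall>k\<in>{1..m}. t k > 0" and p: "\<forall>k\<in>{1..m}. om k \<noteq> 0 \<longrightarrow> poly p (t k) \<noteq> 0"
    and "c \<noteq> 0" "d \<noteq> 0"
  shows "(\<Sum>k=1..m. (om k * w0 a (t k) / d * poly p (t k) * poly q (t k))\<^sup>2
                      / (om k * w0 a (t k) / c * (poly p (t k))\<^sup>2))
       = c / d\<^sup>2 * jump_functional m a om t (q * q)"
  unfolding jump_functional_def sum_distrib_left
proof (rule sum.cong)
  fix k
  assume k: "k \<in> {1..m}"
  show "(om k * w0 a (t k) / d * poly p (t k) * poly q (t k))\<^sup>2 / (om k * w0 a (t k) / c * (poly p (t k))\<^sup>2)
      = c / d\<^sup>2 * (om k * w0 a (t k) * poly (q * q) (t k))"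
  proof (cases "om k = 0")
    case True
    \<comment> \<open>both sides vanish, the left one because \<open>x / 0 = 0\<close>\<close>
    then show ?thesis
      by simp
  next
    case False
    moreover have "w0 a (t k) > 0"
      using bspec[OF t k] by (simp add: w0_def)
    moreover have "poly p (t k) \<noteq> 0"
      using p k False by blast
    ultimately show ?thesis
      using \<open>c \<noteq> 0\<close> \<open>d \<noteq> 0\<close> by (simp add: field_simps power2_eq_square)
  qed
qed simp

theorem lemma2p5:
  fixes m :: nat and a :: real and t om :: "nat \<Rightarrow> real"
    and P :: "nat \<Rightarrow> real poly" and alpha beta :: "nat \<Rightarrow> real"
  assumes m: "m \<ge> 1"
    and a: "a > -1"
    and t1: "0 < t 1"
    and tmono: "\<And>k. 1 \<le> k \<Longrightarrow> k < m \<Longrightarrow> t k < t (Suc k)"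
    and om: "\<And>l. l \<le> m \<Longrightarrow> (\<Sum>k=0..l. om k) \<ge> 0"
    and OP: "monic_OPs (wgt m a om t) P"
    and rec0: "[:0, 1:] * P 0 = P 1 + smult (alpha 0) (P 0)"
    and rec: "\<And>n. n \<ge> 1 \<Longrightarrow>
       [:0, 1:] * P n = P (Suc n) + smult (alpha n) (P n) + smult (beta n) (P (n - 1))"
  defines "h \<equiv> (\<lambda>n. ip (wgt m a om t) (P n) (P n))"
  defines "R \<equiv> (\<lambda>n k. om k * w0 a (t k) / h n * (poly (P n) (t k))^2)"
  defines "r \<equiv> (\<lambda>n k. om k * w0 a (t k) / h (n - 1) * poly (P n) (t k) * poly (P (n - 1)) (t k))"
  shows "(\<forall>n. alpha n = (\<Sum>k=1..m. t k * R n k) + 2 * real n + 1 + a) \<and>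
         (\<forall>n \<ge> 1. (\<forall>k\<in>{1..m}. om k \<noteq> 0 \<longrightarrow> poly (P n) (t k) \<noteq> 0) \<longrightarrow>
            (\<Sum>k=1..m. R n k) \<noteq> 1 \<longrightarrow>
            beta n = (real n + a + (\<Sum>k=1..m. r n k)) * (real n + (\<Sum>k=1..m. r n k))
                       / (1 - (\<Sum>k=1..m. R n k))
                     + (\<Sum>k=1..m. (r n k)^2 / R n k))"
proof -
  have t_pos: "\<forall>k\<in>{1..m}. t k > 0"
    using t1 tmono by (rule pos_of_increasing_ivl)
  interpret laguerre_type_functional "\<lambda>f. ip (wgt m a om t) f 1" P "jump_functional m a om t" a
    by (rule laguerre_type_functional_wgt[OF a t_pos OP])
  have h_eq: "ip (wgt m a om t) (P n * P n) 1 = h n" for n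
    by (simp add: h_def ip_mult_one)
  have h_nonzero: "h n \<noteq> 0" for n
    using I_P_P_nonzero[of n] by (simp add: h_eq)
  have sum_R: "(\<Sum>k=1..m. R n k) = jump_functional m a om t (P n * P n) / h n" for n
    by (simp add: R_def jump_functional_div power2_eq_square)
  have "alpha n = (\<Sum>k=1..m. t k * R n k) + 2 * real n + 1 + a" for n
  proof -
    let ?q = "if n = 0 then 0 else smult (beta n) (P (n - 1))"
    have "pCons 0 (P n) = P (Suc n) + smult (alpha n) (P n) + ?q"
      using rec0 rec[of n] by (cases n) auto
    moreover have "coeff ?q i = 0" if "n \<le> i" for i
      using that by (simp add: coeff_P_above)
    moreover have "(\<Sum>k=1..m. t k * R n k) = jump_functional m a om t (pCons 0 (P n * P n)) / h n"
      by (simp add: R_def jump_functional_div power2_eq_square mult_ac)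
    ultimately show ?thesis
      using recurrence_alpha_eq[of n "alpha n" ?q] by (simp add: h_eq)
  qed
  moreover have "beta n = (real n + a + (\<Sum>k=1..m. r n k)) * (real n + (\<Sum>k=1..m. r n k))
                       / (1 - (\<Sum>k=1..m. R n k))
                     + (\<Sum>k=1..m. (r n k)^2 / R n k)"
    if "n \<ge> 1" and nz: "\<forall>k\<in>{1..m}. om k \<noteq> 0 \<longrightarrow> poly (P n) (t k) \<noteq> 0"
      and R_ne: "(\<Sum>k=1..m. R n k) \<noteq> 1" for n
  proof -
    obtain N where n: "n = Suc N"
      using \<open>n \<ge> 1\<close> by (cases n) auto
    have rec_N: "pCons 0 (P (Suc N)) = P (Suc (Suc N)) + smult (alpha n) (P (Suc N)) + smult (beta n) (P N)"
      using rec[of n] n by simp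
    have "jump_functional m a om t (P n * P n) \<noteq> h n"
      using R_ne h_nonzero[of n] unfolding sum_R by auto
    then have beta_eq: "beta n = (real n + a + jump_functional m a om t (P n * P N) / h N)
                                 * (real n + jump_functional m a om t (P n * P N) / h N)
                                 / (1 - jump_functional m a om t (P n * P n) / h n)
                               + h n / (h N)\<^sup>2 * jump_functional m a om t (P N * P N)"
      using recurrence_beta_formula[OF rec_N] by (simp add: n h_eq)
    have sum_r: "(\<Sum>k=1..m. r n k) = jump_functional m a om t (P n * P N) / h N"
      by (simp add: r_def n jump_functional_div mult.assoc)
    have sum_r_R: "(\<Sum>k=1..m. (r n k)\<^sup>2 / R n k) = h n / (h N)\<^sup>2 * jump_functional m a om t (P N * P N)"
      using sum_square_ratio_eq_jump_functional[OF t_pos nz h_nonzero h_nonzero]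
      by (simp add: r_def R_def n)
    show ?thesis
      unfolding sum_R sum_r sum_r_R by (rule beta_eq)
  qed
  ultimately show ?thesis
    by blast
qed

end
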